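(* For all $a,b>0$ and $0\le v\le 1$, $$L(a,b)\le \frac{1}{2}A_v(a,b)+\frac{1}{2}G_{1-v}(a,b).$$
   Context: For $a,b>0$ and $0\le v\le 1$: $A_v(a,b):=(1-v)a+vb$, $G_v(a,b):=a^{1-v}b^v$ (so $G_{1-v}(a,b)=a^vb^{1-v}$). The logarithmic mean is $L(a,b):=\frac{a-b}{\log a-\log b}$ for $a\ne b$ and $L(a,a):=a$. *)

theory Defs
  imports Complex_Main
begin

definition wam :: "real \<Rightarrow> real \<Rightarrow> real \<Rightarrow> real" where
  "wam v a b = (1 - v) * a + v * b"

definition wgm :: "real \<Rightarrow> real \<Rightarrow> real \<Rightarrow> real" where
  "wgm v a b = a powr (1 - v) * b powr v"

definition logmean :: "real \<Rightarrow> real \<Rightarrow> real" where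
  "logmean a b = (if a = b then a else (a - b) / (ln a - ln b))"

end

theory Submission
  imports Defs
begin

text \<open>The point \<open>m = G\<^sub>1\<^sub>-\<^sub>v(a,b) = a\<^sup>v b\<^sup>1\<^sup>-\<^sup>v\<close> divides the segment from \<open>ln a\<close> to \<open>ln b\<close>
  in the ratio \<open>1 - v : v\<close>. Since \<open>(ln x - ln y) L(x,y) = x - y\<close>, this makes
  \<open>L(a,b) = (1-v) L(a,m) + v L(m,b)\<close>, and the classical bound \<open>L \<le> A\<close> applied
  to both pieces gives \<open>L(a,b) \<le> (1-v)(a+m)/2 + v(m+b)/2 = A\<^sub>v(a,b)/2 + m/2\<close>.\<close>

lemma exp_trapezoid_mono:
  fixes x y :: real
  assumes "x \<le> y"
  shows "x * (1 + exp x) - 2 * (exp x - 1) \<le> y * (1 + exp y) - 2 * (exp y - 1)"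
proof (rule deriv_nonneg_imp_mono[OF _ _ assms])
  fix t :: real
  show "((\<lambda>x. x * (1 + exp x) - 2 * (exp x - 1)) has_real_derivative 1 - exp t + t * exp t) (at t)"
    by (rule derivative_eq_intros refl | simp add: algebra_simps)+
  have "exp t * (1 - t) \<le> exp t * exp (- t)"
    using exp_ge_add_one_self[of "- t"] by (simp add: mult_left_mono)
  then show "0 \<le> 1 - exp t + t * exp t"
    by (simp add: exp_minus field_simps)
qed

lemma exp_diff_one_div_le:
  fixes t :: real
  assumes "t \<noteq> 0"
  shows "(exp t - 1) / t \<le> (1 + exp t) / 2"
proof (cases "t > 0")
  case True
  with exp_trapezoid_mono[of 0 t] show ?thesis by (simp add: field_simps)
next
  case False
  with assms exp_trapezoid_mono[of t 0] show ?thesis by (simp add: field_simps)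
qed

lemma ln_diff_mult_logmean:
  fixes a b :: real
  assumes "a > 0" "b > 0"
  shows "(ln a - ln b) * logmean a b = a - b"
  using assms by (simp add: logmean_def)

lemma logmean_le_arith_mean:
  fixes a b :: real
  assumes "a > 0" "b > 0"
  shows "logmean a b \<le> (a + b) / 2"
proof (cases "a = b")
  case False
  define s where "s = ln b - ln a"
  have "s \<noteq> 0" "b = a * exp s"
    using False assms by (simp_all add: s_def exp_diff)
  moreover have "logmean a b = (b - a) / s"
    using ln_diff_mult_logmean[OF assms] \<open>s \<noteq> 0\<close> by (simp add: s_def field_simps)
  ultimately have "logmean a b = a * ((exp s - 1) / s)" "(a + b) / 2 = a * ((1 + exp s) / 2)"
    by (simp_all add: algebra_simps)
  moreover have "a * ((exp s - 1) / s) \<le> a * ((1 + exp s) / 2)"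
    by (rule mult_left_mono[OF exp_diff_one_div_le[OF \<open>s \<noteq> 0\<close>]]) (use assms in simp)
  ultimately show ?thesis
    by simp
qed (simp add: logmean_def)

lemma logmean_geometric_split:
  fixes a b v :: real
  assumes "a > 0" "b > 0"
  defines "m \<equiv> wgm (1 - v) a b"
  shows "logmean a b = (1 - v) * logmean a m + v * logmean m b"
proof (cases "a = b")
  case True
  then show ?thesis
    using assms by (simp add: m_def wgm_def logmean_def powr_add[symmetric] algebra_simps)
next
  case False
  have "m > 0"
    using assms by (simp add: m_def wgm_def)
  have ln_m: "ln m = v * ln a + (1 - v) * ln b"
    using assms by (simp add: m_def wgm_def ln_mult ln_powr)
  have "(ln a - ln b) * ((1 - v) * logmean a m + v * logmean m b)
      = (ln a - ln m) * logmean a m + (ln m - ln b) * logmean m b"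
    by (simp add: ln_m algebra_simps)
  also have "\<dots> = a - b"
    using ln_diff_mult_logmean[OF \<open>a > 0\<close> \<open>m > 0\<close>] ln_diff_mult_logmean[OF \<open>m > 0\<close> \<open>b > 0\<close>]
    by simp
  also have "\<dots> = (ln a - ln b) * logmean a b"
    using ln_diff_mult_logmean[OF assms(1,2)] by simp
  finally show ?thesis
    using False assms by simp
qed

theorem theorem2p5:
  fixes a b v :: real
  assumes "a > 0" and "b > 0" and "0 \<le> v" and "v \<le> 1"
  shows "logmean a b \<le> wam v a b / 2 + wgm (1 - v) a b / 2"
proof -
  define m where "m = wgm (1 - v) a b"
  have "m > 0"
    using assms by (simp add: m_def wgm_def)
  have "logmean a b = (1 - v) * logmean a m + v * logmean m b"
    unfolding m_def using assms(1,2) by (rule logmean_geometric_split)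
  also have "\<dots> \<le> (1 - v) * ((a + m) / 2) + v * ((m + b) / 2)"
    using assms \<open>m > 0\<close>
    by (intro add_mono mult_left_mono logmean_le_arith_mean) simp_all
  also have "\<dots> = wam v a b / 2 + wgm (1 - v) a b / 2"
    by (simp add: m_def wam_def field_simps)
  finally show ?thesis .
qed

end
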